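(* Let $I$ be a nonempty real interval containing $0$ and let $f\colon I^n\to\mathbb{R}$. The following are equivalent: (i) $f$ is comonotonically modular; (ii) there exist a comonotonically modular $g\colon I_+^n\to\mathbb{R}$ and a comonotonically modular $h\colon I_-^n\to\mathbb{R}$ such that $f_0(\mathbf{x})=g_0(\mathbf{x}^+)+h_0(-\mathbf{x}^-)$ for every $\mathbf{x}\in I^n$; (iii) there exist $g\colon I_+^n\to\mathbb{R}$ and $h\colon I_-^n\to\mathbb{R}$ such that for every $\sigma\in S_n$ and every $\mathbf{x}\in I^n_\sigma$, $$f_0(\mathbf{x})=\sum_{1\leq i\leq p}\Big(h\big(x_{\sigma(i)}\mathbf{1}_{A^\downarrow_\sigma(i)}\big)-h\big(x_{\sigma(i)}\mathbf{1}_{A^\downarrow_\sigma(i-1)}\big)\Big)+\sum_{p+1\leq i\leq n}\Big(g\big(x_{\sigma(i)}\mathbf{1}_{A^\uparrow_\sigma(i)}\big)-g\big(x_{\sigma(i)}\mathbf{1}_{A^\uparrow_\sigma(i+1)}\big)\Big),$$ where $p\in\{0,\ldots,n\}$ is such that $x_{\sigma(p)}<0\leq x_{\sigma(p+1)}$ (with the conventions $x_{\sigma(0)}=-\infty$, $x_{\sigma(n+1)}=+\infty$). Moreover, in (ii) and (iii) one can take $g=f|_{I_+^n}$ and $h=f|_{I_-^n}$.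
   Context: Notation: $[n]=\{1,\ldots,n\}$; $S_n$ is the set of permutations of $[n]$; $I_+=I\cap[0,\infty[$, $I_-=I\cap\,]-\infty,0]$; $\mathbf{1}_A$ is the indicator tuple of $A\subseteq[n]$, $\mathbf{0}=\mathbf{1}_\varnothing$; for a function $u$ defined at $\mathbf{0}$, $u_0=u-u(\mathbf{0})$; $\mathbf{x}^+$ has components $\max(x_i,0)$ and $\mathbf{x}^-=(-\mathbf{x})^+$. For $\sigma\in S_n$, $\mathbb{R}^n_\sigma=\{\mathbf{x}: x_{\sigma(1)}\leq\cdots\leq x_{\sigma(n)}\}$, $I^n_\sigma=I^n\cap\mathbb{R}^n_\sigma$, $A^\uparrow_\sigma(i)=\{\sigma(i),\ldots,\sigma(n)\}$ with $A^\uparrow_\sigma(n+1)=\varnothing$, and $A^\downarrow_\sigma(i)=\{\sigma(1),\ldots,\sigma(i)\}$ with $A^\downarrow_\sigma(0)=\varnothing$. Two tuples in $J^n$ ($J$ an interval) are comonotonic if they both lie in $J^n\cap\mathbb{R}^n_\sigma$ for some $\sigma\in S_n$. A function $u\colon J^n\to\mathbb{R}$ is comonotonically modular if $u(\mathbf{x})+u(\mathbf{x}')=u(\mathbf{x}\wedge\mathbf{x}')+u(\mathbf{x}\vee\mathbf{x}')$ for all comonotonic $\mathbf{x},\mathbf{x}'\in J^n$, where $\wedge,\vee$ are componentwise min and max. *)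

theory Defs
  imports "HOL-Analysis.Analysis" "HOL-Combinatorics.Permutations"
begin

text \<open>Tuples in J^n are represented as functions nat => real whose relevant
  components are indexed by {1..n}; components outside {1..n} are fixed to 0,
  so that J^n corresponds bijectively to the set below.\<close>

definition cube :: "nat \<Rightarrow> real set \<Rightarrow> (nat \<Rightarrow> real) set" where
  "cube n J = {x. (\<forall>i\<in>{1..n}. x i \<in> J) \<and> (\<forall>i. i \<notin> {1..n} \<longrightarrow> x i = 0)}"

definition Ipos :: "real set \<Rightarrow> real set" where
  "Ipos I = I \<inter> {0..}"

definition Ineg :: "real set \<Rightarrow> real set" where
  "Ineg I = I \<inter> {..0}"

definition zerovec :: "nat \<Rightarrow> real" where
  "zerovec = (\<lambda>_. 0)"

definition shift0 :: "((nat \<Rightarrow> real) \<Rightarrow> real) \<Rightarrow> (nat \<Rightarrow> real) \<Rightarrow> real" where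
  "shift0 u x = u x - u zerovec"

definition vpos :: "(nat \<Rightarrow> real) \<Rightarrow> nat \<Rightarrow> real" where
  "vpos x = (\<lambda>i. max (x i) 0)"

definition vneg :: "(nat \<Rightarrow> real) \<Rightarrow> nat \<Rightarrow> real" where
  "vneg x = vpos (\<lambda>i. - x i)"

definition scind :: "real \<Rightarrow> nat set \<Rightarrow> nat \<Rightarrow> real" where
  "scind c A = (\<lambda>j. if j \<in> A then c else 0)"

definition sorted_by :: "nat \<Rightarrow> (nat \<Rightarrow> nat) \<Rightarrow> (nat \<Rightarrow> real) \<Rightarrow> bool" where
  "sorted_by n \<sigma> x = (\<forall>i j. 1 \<le> i \<and> i \<le> j \<and> j \<le> n \<longrightarrow> x (\<sigma> i) \<le> x (\<sigma> j))"

definition Aup :: "nat \<Rightarrow> (nat \<Rightarrow> nat) \<Rightarrow> nat \<Rightarrow> nat set" where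
  "Aup n \<sigma> i = \<sigma> ` {i..n}"

definition Adown :: "(nat \<Rightarrow> nat) \<Rightarrow> nat \<Rightarrow> nat set" where
  "Adown \<sigma> i = \<sigma> ` {1..i}"

definition comonotonic :: "nat \<Rightarrow> real set \<Rightarrow> (nat \<Rightarrow> real) \<Rightarrow> (nat \<Rightarrow> real) \<Rightarrow> bool" where
  "comonotonic n J x y =
     (\<exists>\<sigma>. \<sigma> permutes {1..n} \<and> x \<in> cube n J \<and> y \<in> cube n J
          \<and> sorted_by n \<sigma> x \<and> sorted_by n \<sigma> y)"

definition comod :: "nat \<Rightarrow> real set \<Rightarrow> ((nat \<Rightarrow> real) \<Rightarrow> real) \<Rightarrow> bool" where
  "comod n J u = (\<forall>x y. comonotonic n J x y \<longrightarrow>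
      u x + u y = u (\<lambda>i. min (x i) (y i)) + u (\<lambda>i. max (x i) (y i)))"

definition cond_ii :: "nat \<Rightarrow> real set \<Rightarrow> ((nat \<Rightarrow> real) \<Rightarrow> real) \<Rightarrow>
    ((nat \<Rightarrow> real) \<Rightarrow> real) \<Rightarrow> ((nat \<Rightarrow> real) \<Rightarrow> real) \<Rightarrow> bool" where
  "cond_ii n I f g h =
     (comod n (Ipos I) g \<and> comod n (Ineg I) h \<and>
      (\<forall>x\<in>cube n I. shift0 f x = shift0 g (vpos x) + shift0 h (\<lambda>i. - vneg x i)))"

definition cond_iii :: "nat \<Rightarrow> real set \<Rightarrow> ((nat \<Rightarrow> real) \<Rightarrow> real) \<Rightarrow>
    ((nat \<Rightarrow> real) \<Rightarrow> real) \<Rightarrow> ((nat \<Rightarrow> real) \<Rightarrow> real) \<Rightarrow> bool" where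
  "cond_iii n I f g h =
     (\<forall>\<sigma> x p. \<sigma> permutes {1..n} \<and> x \<in> cube n I \<and> sorted_by n \<sigma> x \<and> p \<le> n
        \<and> (p = 0 \<or> x (\<sigma> p) < 0) \<and> (p = n \<or> 0 \<le> x (\<sigma> (p + 1))) \<longrightarrow>
        shift0 f x =
          (\<Sum>i=1..p. h (scind (x (\<sigma> i)) (Adown \<sigma> i)) - h (scind (x (\<sigma> i)) (Adown \<sigma> (i - 1))))
        + (\<Sum>i=p+1..n. g (scind (x (\<sigma> i)) (Aup n \<sigma> i)) - g (scind (x (\<sigma> i)) (Aup n \<sigma> (i + 1)))))"

end

theory Submission
  imports Defs
begin

(* Every x is comonotonic with 0, and min(x,0) = -x^-,
   max(x,0) = x^+; hence a comonotonically modular f satisfies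
   f_0(x) = f_0(x^+) + f_0(-x^-), which is (i) \<Rightarrow> (ii) with g = h = f.
   Conversely, x \<mapsto> x^+ and x \<mapsto> -x^- preserve comonotonicity and commute with
   componentwise min and max, so (ii) \<Rightarrow> (i).

   For (i) \<Rightarrow> (iii), fix \<sigma> sorting x and the sign index p.  The vector x^+ is
   built from 0 by adding the coordinates \<sigma>(n), \<sigma>(n-1), ..., \<sigma>(p+1) one at a
   time; each such layer step is one application of comonotonic modularity,
   which trades the increment of f for the increment from c 1_{A^up(i+1)} to
   c 1_{A^up(i)}, c = x_\<sigma>(i).  Telescoping gives the g-sum of (iii); the
   h-sum arises symmetrically from -x^-.  For (iii) \<Rightarrow> (i), the right-hand side
   of (iii) is a sum of terms each depending on the single coordinate x_\<sigma>(i),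
   and such sums are modular for any two vectors sorted by the same \<sigma>. *)

lemma cube_mono: "J \<subseteq> J' \<Longrightarrow> cube n J \<subseteq> cube n J'"
  unfolding cube_def by blast

lemma cube_in: "x \<in> cube n J \<Longrightarrow> l \<in> {1..n} \<Longrightarrow> x l \<in> J"
  unfolding cube_def by blast

lemma cube_out: "x \<in> cube n J \<Longrightarrow> l \<notin> {1..n} \<Longrightarrow> x l = 0"
  unfolding cube_def by blast

lemma zerovec_cube: "0 \<in> J \<Longrightarrow> zerovec \<in> cube n J"
  unfolding cube_def zerovec_def by auto

lemma min_cube: "x \<in> cube n J \<Longrightarrow> y \<in> cube n J \<Longrightarrow> (\<lambda>i. min (x i) (y i)) \<in> cube n J"
  unfolding cube_def by (auto simp: min_def)

lemma max_cube: "x \<in> cube n J \<Longrightarrow> y \<in> cube n J \<Longrightarrow> (\<lambda>i. max (x i) (y i)) \<in> cube n J"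
  unfolding cube_def by (auto simp: max_def)

lemma vpos_cube: "x \<in> cube n I \<Longrightarrow> 0 \<in> I \<Longrightarrow> vpos x \<in> cube n (Ipos I)"
  unfolding cube_def vpos_def Ipos_def by (auto simp: max_def)

lemma vneg_cube: "x \<in> cube n I \<Longrightarrow> 0 \<in> I \<Longrightarrow> (\<lambda>i. - vneg x i) \<in> cube n (Ineg I)"
  unfolding cube_def vneg_def vpos_def Ineg_def by (auto simp: max_def)

text \<open>The restriction x 1_A of a vector to a set of coordinates: the partial
  sums through which x^+ and -x^- are built up layer by layer.\<close>

definition restr :: "(nat \<Rightarrow> real) \<Rightarrow> nat set \<Rightarrow> nat \<Rightarrow> real" where
  "restr x A = (\<lambda>l. if l \<in> A then x l else 0)"

lemma restr_cube: "x \<in> cube n J \<Longrightarrow> 0 \<in> J \<Longrightarrow> restr x A \<in> cube n J"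
  unfolding cube_def restr_def by auto

lemma scind_cube: "c \<in> J \<Longrightarrow> 0 \<in> J \<Longrightarrow> A \<subseteq> {1..n} \<Longrightarrow> scind c A \<in> cube n J"
  unfolding cube_def scind_def by auto

lemma restr_empty: "restr x {} = zerovec"
  unfolding restr_def zerovec_def by simp

lemma cube_eqI:
  assumes "x \<in> cube n J" "y \<in> cube n J'" "\<sigma> permutes {1..n}"
    and "\<And>j. j \<in> {1..n} \<Longrightarrow> x (\<sigma> j) = y (\<sigma> j)"
  shows "x = y"
proof
  fix l show "x l = y l"
  proof (cases "l \<in> {1..n}")
    case True
    then obtain j where "j \<in> {1..n}" "l = \<sigma> j"
      using permutes_image[OF assms(3)] by blast
    then show ?thesis using assms(4) by simp
  next
    case False
    then show ?thesis using cube_out[OF assms(1)] cube_out[OF assms(2)] by simp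
  qed
qed

lemma zerovec_sorted: "sorted_by n \<sigma> zerovec"
  unfolding sorted_by_def zerovec_def by auto

lemma min_sorted: "sorted_by n \<sigma> x \<Longrightarrow> sorted_by n \<sigma> y \<Longrightarrow> sorted_by n \<sigma> (\<lambda>i. min (x i) (y i))"
  unfolding sorted_by_def by (meson min.mono)

lemma max_sorted: "sorted_by n \<sigma> x \<Longrightarrow> sorted_by n \<sigma> y \<Longrightarrow> sorted_by n \<sigma> (\<lambda>i. max (x i) (y i))"
  unfolding sorted_by_def by (meson max.mono)

lemma vpos_sorted: "sorted_by n \<sigma> x \<Longrightarrow> sorted_by n \<sigma> (vpos x)"
  unfolding sorted_by_def vpos_def by (meson max.mono order_refl)

lemma vneg_sorted: "sorted_by n \<sigma> x \<Longrightarrow> sorted_by n \<sigma> (\<lambda>i. - vneg x i)"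
  unfolding sorted_by_def vneg_def vpos_def by fastforce

lemma exists_sorting: "\<exists>\<sigma>. \<sigma> permutes {1..n} \<and> sorted_by n \<sigma> (x :: nat \<Rightarrow> real)"
proof -
  define xs where "xs = sort_key x [1..<Suc n]"
  have len: "length xs = n" and dist: "distinct xs" and set_xs: "set xs = {1..n}"
    and srt: "sorted (map x xs)"
    by (auto simp: xs_def)
  define \<sigma> where "\<sigma> = (\<lambda>i. if i \<in> {1..n} then xs ! (i - 1) else i)"
  have img: "\<sigma> ` {1..n} = {1..n}"
  proof
    show "\<sigma> ` {1..n} \<subseteq> {1..n}" using len set_xs nth_mem by (force simp: \<sigma>_def)
    show "{1..n} \<subseteq> \<sigma> ` {1..n}"
    proof
      fix y assume "y \<in> {1..n}"
      then obtain k where k: "k < n" "xs ! k = y" using len set_xs by (metis in_set_conv_nth)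
      then have "\<sigma> (Suc k) = y" by (simp add: \<sigma>_def)
      then show "y \<in> \<sigma> ` {1..n}" using k by force
    qed
  qed
  have "inj_on \<sigma> {1..n}"
  proof (rule inj_onI)
    fix a b assume ab: "a \<in> {1..n}" "b \<in> {1..n}" and "\<sigma> a = \<sigma> b"
    then have "xs ! (a - 1) = xs ! (b - 1)" by (simp add: \<sigma>_def)
    then have "a - 1 = b - 1" using nth_eq_iff_index_eq[OF dist] ab len by force
    then show "a = b" using ab by auto
  qed
  then have "\<sigma> permutes {1..n}"
    using img by (intro bij_imp_permutes) (auto simp: bij_betw_def \<sigma>_def)
  moreover have "sorted_by n \<sigma> x"
    unfolding sorted_by_def
  proof (intro allI impI)
    fix i j assume h: "1 \<le> i \<and> i \<le> j \<and> j \<le> n"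
    then have "i - 1 \<le> j - 1" "j - 1 < length xs" using len by auto
    then show "x (\<sigma> i) \<le> x (\<sigma> j)"
      using sorted_nth_mono[OF srt] h by (simp add: \<sigma>_def)
  qed
  ultimately show ?thesis by blast
qed

lemma Aup_mem: "\<sigma> permutes {1..n} \<Longrightarrow> \<sigma> j \<in> Aup n \<sigma> m \<longleftrightarrow> m \<le> j \<and> j \<le> n"
  unfolding Aup_def by (simp add: inj_image_mem_iff permutes_inj)

lemma Adown_mem: "\<sigma> permutes {1..n} \<Longrightarrow> \<sigma> j \<in> Adown \<sigma> m \<longleftrightarrow> 1 \<le> j \<and> j \<le> m"
  unfolding Adown_def by (simp add: inj_image_mem_iff permutes_inj)

lemma Aup_subset: "\<sigma> permutes {1..n} \<Longrightarrow> 1 \<le> m \<Longrightarrow> Aup n \<sigma> m \<subseteq> {1..n}"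
  unfolding Aup_def using permutes_image[of \<sigma> "{1..n}"] by auto

lemma Adown_subset: "\<sigma> permutes {1..n} \<Longrightarrow> m \<le> n \<Longrightarrow> Adown \<sigma> m \<subseteq> {1..n}"
  unfolding Adown_def using permutes_image[of \<sigma> "{1..n}"] by auto

lemma restr_Aup_sorted:
  assumes "\<sigma> permutes {1..n}" "sorted_by n \<sigma> x" "\<And>j. m \<le> j \<Longrightarrow> j \<le> n \<Longrightarrow> 0 \<le> x (\<sigma> j)"
  shows "sorted_by n \<sigma> (restr x (Aup n \<sigma> m))"
  using assms unfolding sorted_by_def restr_def Aup_mem[OF assms(1)] by force

lemma restr_Adown_sorted:
  assumes "\<sigma> permutes {1..n}" "sorted_by n \<sigma> x" "\<And>j. 1 \<le> j \<Longrightarrow> j \<le> m \<Longrightarrow> x (\<sigma> j) \<le> 0"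
  shows "sorted_by n \<sigma> (restr x (Adown \<sigma> m))"
  using assms unfolding sorted_by_def restr_def Adown_mem[OF assms(1)] by force

lemma scind_Aup_sorted: "\<sigma> permutes {1..n} \<Longrightarrow> 0 \<le> c \<Longrightarrow> sorted_by n \<sigma> (scind c (Aup n \<sigma> m))"
  unfolding sorted_by_def scind_def by (auto simp: Aup_mem)

lemma scind_Adown_sorted: "\<sigma> permutes {1..n} \<Longrightarrow> c \<le> 0 \<Longrightarrow> sorted_by n \<sigma> (scind c (Adown \<sigma> m))"
  unfolding sorted_by_def scind_def by (auto simp: Adown_mem)

lemma comodD:
  assumes "comod n J u" "\<sigma> permutes {1..n}" "x \<in> cube n J" "y \<in> cube n J"
    "sorted_by n \<sigma> x" "sorted_by n \<sigma> y"
  shows "u x + u y = u (\<lambda>i. min (x i) (y i)) + u (\<lambda>i. max (x i) (y i))"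
  using assms unfolding comod_def comonotonic_def by blast

lemma comod_mono: "J \<subseteq> J' \<Longrightarrow> comod n J' u \<Longrightarrow> comod n J u"
  unfolding comod_def comonotonic_def using cube_mono by blast

lemma comod_split_at_zero:
  assumes "comod n I f" "x \<in> cube n I" "0 \<in> I"
  shows "f x + f zerovec = f (\<lambda>i. - vneg x i) + f (vpos x)"
proof -
  obtain \<sigma> where "\<sigma> permutes {1..n}" "sorted_by n \<sigma> x" using exists_sorting by blast
  from comodD[OF assms(1) this(1) assms(2) zerovec_cube[OF assms(3)] this(2) zerovec_sorted]
  moreover have "(\<lambda>i. min (x i) (zerovec i)) = (\<lambda>i. - vneg x i)"
    by (auto simp: zerovec_def vneg_def vpos_def)
  moreover have "(\<lambda>i. max (x i) (zerovec i)) = vpos x"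
    by (auto simp: zerovec_def vpos_def)
  ultimately show ?thesis by simp
qed

text \<open>Layer step on the nonnegative side: for c = x_\<sigma>(k) \<ge> 0, the pair
  x 1_{A^up(k+1)}, c 1_{A^up(k)} is comonotonic with meet c 1_{A^up(k+1)} and
  join x 1_{A^up(k)}, so adding coordinate \<sigma>(k) changes f as along c 1_A.\<close>

lemma comod_up_layer:
  assumes comod: "comod n I f" and I0: "0 \<in> I" and s: "\<sigma> permutes {1..n}"
    and x: "x \<in> cube n I" "sorted_by n \<sigma> x" and k: "1 \<le> k" "k \<le> n" and nn: "0 \<le> x (\<sigma> k)"
  shows "f (restr x (Aup n \<sigma> k)) - f (restr x (Aup n \<sigma> (Suc k)))
       = f (scind (x (\<sigma> k)) (Aup n \<sigma> k)) - f (scind (x (\<sigma> k)) (Aup n \<sigma> (Suc k)))"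
proof -
  define c where "c = x (\<sigma> k)"
  define a where "a = restr x (Aup n \<sigma> (Suc k))"
  define b where "b = scind c (Aup n \<sigma> k)"
  have ge: "\<And>j. k \<le> j \<Longrightarrow> j \<le> n \<Longrightarrow> c \<le> x (\<sigma> j)"
    using x(2) k unfolding sorted_by_def c_def by auto
  have c_in: "c \<in> I" unfolding c_def using cube_in[OF x(1)] permutes_in_image[OF s] k by auto
  have a_cube: "a \<in> cube n I" unfolding a_def using restr_cube[OF x(1) I0] .
  have b_cube: "b \<in> cube n I" unfolding b_def using scind_cube[OF c_in I0 Aup_subset[OF s k(1)]] .
  have a_sorted: "sorted_by n \<sigma> a"
    unfolding a_def
  proof (rule restr_Aup_sorted[OF s x(2)])
    fix j assume "Suc k \<le> j" "j \<le> n"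
    then show "0 \<le> x (\<sigma> j)" using ge[of j] nn c_def by simp
  qed
  have b_sorted: "sorted_by n \<sigma> b"
    unfolding b_def using scind_Aup_sorted[OF s] nn c_def by simp
  have modular: "f a + f b = f (\<lambda>i. min (a i) (b i)) + f (\<lambda>i. max (a i) (b i))"
    by (rule comodD[OF comod s a_cube b_cube a_sorted b_sorted])
  have meet: "(\<lambda>i. min (a i) (b i)) = scind c (Aup n \<sigma> (Suc k))"
  proof (rule cube_eqI[OF min_cube[OF a_cube b_cube] scind_cube[OF c_in I0] s])
    show "Aup n \<sigma> (Suc k) \<subseteq> {1..n}" using Aup_subset[OF s] by simp
    fix j assume "j \<in> {1..n}"
    then show "min (a (\<sigma> j)) (b (\<sigma> j)) = scind c (Aup n \<sigma> (Suc k)) (\<sigma> j)"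
      using ge[of j] nn unfolding a_def b_def restr_def scind_def Aup_mem[OF s] c_def by auto
  qed
  have join: "(\<lambda>i. max (a i) (b i)) = restr x (Aup n \<sigma> k)"
  proof (rule cube_eqI[OF max_cube[OF a_cube b_cube] restr_cube[OF x(1) I0] s])
    fix j assume "j \<in> {1..n}"
    then show "max (a (\<sigma> j)) (b (\<sigma> j)) = restr x (Aup n \<sigma> k) (\<sigma> j)"
      using ge[of j] nn unfolding a_def b_def restr_def scind_def Aup_mem[OF s] c_def
      by (cases "j = k") auto
  qed
  from modular[unfolded meet join] show ?thesis unfolding a_def b_def c_def by linarith
qed

lemma comod_down_layer:
  assumes comod: "comod n I f" and I0: "0 \<in> I" and s: "\<sigma> permutes {1..n}"
    and x: "x \<in> cube n I" "sorted_by n \<sigma> x" and k: "1 \<le> k" "k \<le> n" and ng: "x (\<sigma> k) < 0"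
  shows "f (restr x (Adown \<sigma> k)) - f (restr x (Adown \<sigma> (k - 1)))
       = f (scind (x (\<sigma> k)) (Adown \<sigma> k)) - f (scind (x (\<sigma> k)) (Adown \<sigma> (k - 1)))"
proof -
  define c where "c = x (\<sigma> k)"
  define a where "a = restr x (Adown \<sigma> (k - 1))"
  define b where "b = scind c (Adown \<sigma> k)"
  have le: "\<And>j. 1 \<le> j \<Longrightarrow> j \<le> k \<Longrightarrow> x (\<sigma> j) \<le> c"
    using x(2) k unfolding sorted_by_def c_def by auto
  have c_in: "c \<in> I" unfolding c_def using cube_in[OF x(1)] permutes_in_image[OF s] k by auto
  have a_cube: "a \<in> cube n I" unfolding a_def using restr_cube[OF x(1) I0] .
  have b_cube: "b \<in> cube n I" unfolding b_def using scind_cube[OF c_in I0 Adown_subset[OF s k(2)]] .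
  have a_sorted: "sorted_by n \<sigma> a"
    unfolding a_def
  proof (rule restr_Adown_sorted[OF s x(2)])
    fix j assume "1 \<le> j" "j \<le> k - 1"
    then have "1 \<le> j" "j \<le> k" by linarith+
    then show "x (\<sigma> j) \<le> 0" using le[of j] ng c_def by simp
  qed
  have b_sorted: "sorted_by n \<sigma> b"
    unfolding b_def using scind_Adown_sorted[OF s] ng c_def by simp
  have modular: "f a + f b = f (\<lambda>i. min (a i) (b i)) + f (\<lambda>i. max (a i) (b i))"
    by (rule comodD[OF comod s a_cube b_cube a_sorted b_sorted])
  have meet: "(\<lambda>i. min (a i) (b i)) = restr x (Adown \<sigma> k)"
  proof (rule cube_eqI[OF min_cube[OF a_cube b_cube] restr_cube[OF x(1) I0] s])
    fix j assume "j \<in> {1..n}"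
    then show "min (a (\<sigma> j)) (b (\<sigma> j)) = restr x (Adown \<sigma> k) (\<sigma> j)"
      using le[of j] ng unfolding a_def b_def restr_def scind_def Adown_mem[OF s] c_def
      by (cases "j = k") auto
  qed
  have join: "(\<lambda>i. max (a i) (b i)) = scind c (Adown \<sigma> (k - 1))"
  proof (rule cube_eqI[OF max_cube[OF a_cube b_cube] scind_cube[OF c_in I0] s])
    show "Adown \<sigma> (k - 1) \<subseteq> {1..n}" using Adown_subset[OF s] k by simp
    fix j assume "j \<in> {1..n}"
    then show "max (a (\<sigma> j)) (b (\<sigma> j)) = scind c (Adown \<sigma> (k - 1)) (\<sigma> j)"
      using le[of j] ng unfolding a_def b_def restr_def scind_def Adown_mem[OF s] c_def
      by (cases "j = k") auto
  qed
  from modular[unfolded meet join] show ?thesis unfolding a_def b_def c_def by linarith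
qed

definition sign_index :: "nat \<Rightarrow> (nat \<Rightarrow> nat) \<Rightarrow> (nat \<Rightarrow> real) \<Rightarrow> nat \<Rightarrow> bool" where
  "sign_index n \<sigma> x p \<longleftrightarrow> p \<le> n \<and> (p = 0 \<or> x (\<sigma> p) < 0) \<and> (p = n \<or> 0 \<le> x (\<sigma> (p + 1)))"

lemma sign_index_exists: "\<exists>p. sign_index n \<sigma> x p"
proof -
  define S where "S = {0} \<union> {i \<in> {1..n}. x (\<sigma> i) < 0}"
  define p where "p = Max S"
  have fin: "finite S" unfolding S_def by auto
  have "p \<in> S" unfolding p_def by (rule Max_in[OF fin]) (simp add: S_def)
  then have "p \<le> n" "p = 0 \<or> x (\<sigma> p) < 0" unfolding S_def by auto
  moreover have "p = n \<or> 0 \<le> x (\<sigma> (p + 1))"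
  proof (rule ccontr)
    assume "\<not> ?thesis"
    then have "p + 1 \<in> S" using \<open>p \<le> n\<close> unfolding S_def by auto
    then show False using Max_ge[OF fin] unfolding p_def[symmetric] by fastforce
  qed
  ultimately show ?thesis unfolding sign_index_def by blast
qed

lemma sign_index_neg:
  assumes "sorted_by n \<sigma> x" "sign_index n \<sigma> x p" "1 \<le> j" "j \<le> p"
  shows "x (\<sigma> j) < 0"
proof -
  have "x (\<sigma> p) < 0" "p \<le> n" using assms(2-4) unfolding sign_index_def by auto
  moreover have "x (\<sigma> j) \<le> x (\<sigma> p)" using assms(1,3,4) \<open>p \<le> n\<close> unfolding sorted_by_def by auto
  ultimately show ?thesis by linarith
qed

lemma sign_index_nonneg:
  assumes "sorted_by n \<sigma> x" "sign_index n \<sigma> x p" "p < j" "j \<le> n"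
  shows "0 \<le> x (\<sigma> j)"
proof -
  have "0 \<le> x (\<sigma> (p + 1))" using assms(2-4) unfolding sign_index_def by auto
  moreover have "x (\<sigma> (p + 1)) \<le> x (\<sigma> j)" using assms(1,3,4) unfolding sorted_by_def by auto
  ultimately show ?thesis by linarith
qed

lemma vpos_as_restr:
  assumes "\<sigma> permutes {1..n}" "x \<in> cube n I" "0 \<in> I" "sorted_by n \<sigma> x" "sign_index n \<sigma> x p"
  shows "vpos x = restr x (Aup n \<sigma> (Suc p))"
proof (rule cube_eqI[OF vpos_cube[OF assms(2,3)] restr_cube[OF assms(2,3)] assms(1)])
  fix j assume "j \<in> {1..n}"
  then show "vpos x (\<sigma> j) = restr x (Aup n \<sigma> (Suc p)) (\<sigma> j)"
    using sign_index_neg[OF assms(4,5), of j] sign_index_nonneg[OF assms(4,5), of j]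
    unfolding vpos_def restr_def Aup_mem[OF assms(1)] by (cases "p < j") auto
qed

lemma vneg_as_restr:
  assumes "\<sigma> permutes {1..n}" "x \<in> cube n I" "0 \<in> I" "sorted_by n \<sigma> x" "sign_index n \<sigma> x p"
  shows "(\<lambda>i. - vneg x i) = restr x (Adown \<sigma> p)"
proof (rule cube_eqI[OF vneg_cube[OF assms(2,3)] restr_cube[OF assms(2,3)] assms(1)])
  fix j assume "j \<in> {1..n}"
  then show "- vneg x (\<sigma> j) = restr x (Adown \<sigma> p) (\<sigma> j)"
    using sign_index_neg[OF assms(4,5), of j] sign_index_nonneg[OF assms(4,5), of j]
    unfolding vneg_def vpos_def restr_def Adown_mem[OF assms(1)] by (cases "p < j") auto
qed

section \<open>(i) implies (ii) and (iii)\<close>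

lemma comod_imp_ii:
  assumes "comod n I f" "0 \<in> I"
  shows "cond_ii n I f f f"
  unfolding cond_ii_def
proof (intro conjI ballI)
  show "comod n (Ipos I) f" "comod n (Ineg I) f"
    using comod_mono[OF _ assms(1)] unfolding Ipos_def Ineg_def by blast+
  fix x assume "x \<in> cube n I"
  from comod_split_at_zero[OF assms(1) this assms(2)]
  show "shift0 f x = shift0 f (vpos x) + shift0 f (\<lambda>i. - vneg x i)"
    unfolding shift0_def by linarith
qed

text \<open>Telescoping the layer steps over A^up(n+1) \<subseteq> ... \<subseteq> A^up(p+1) yields
  f_0(x^+) as the g-sum of (iii), and over A^down(0) \<subseteq> ... \<subseteq> A^down(p) yields
  f_0(-x^-) as the h-sum.\<close>

lemma comod_up_sum:
  assumes comod: "comod n I f" and I0: "0 \<in> I" and s: "\<sigma> permutes {1..n}"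
    and x: "x \<in> cube n I" "sorted_by n \<sigma> x" and p: "sign_index n \<sigma> x p"
  shows "(\<Sum>i=p+1..n. f (scind (x (\<sigma> i)) (Aup n \<sigma> i)) - f (scind (x (\<sigma> i)) (Aup n \<sigma> (i + 1))))
       = shift0 f (vpos x)"
proof -
  define W where "W i = f (restr x (Aup n \<sigma> i))" for i
  have "p \<le> n" using p unfolding sign_index_def by simp
  have "(\<Sum>i=p+1..n. f (scind (x (\<sigma> i)) (Aup n \<sigma> i)) - f (scind (x (\<sigma> i)) (Aup n \<sigma> (i + 1))))
      = (\<Sum>i=Suc p..n. W i - W (Suc i))"
    using comod_up_layer[OF comod I0 s x] sign_index_nonneg[OF x(2) p]
    by (intro sum.cong) (auto simp: W_def)
  also have "\<dots> = W (Suc p) - W (Suc n)"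
    using sum_Suc_diff[of "Suc p" n "\<lambda>i. - W i"] \<open>p \<le> n\<close> by simp
  also have "\<dots> = shift0 f (vpos x)"
    unfolding W_def shift0_def vpos_as_restr[OF s x(1) I0 x(2) p] Aup_def
    by (simp add: restr_empty)
  finally show ?thesis .
qed

lemma comod_down_sum:
  assumes comod: "comod n I f" and I0: "0 \<in> I" and s: "\<sigma> permutes {1..n}"
    and x: "x \<in> cube n I" "sorted_by n \<sigma> x" and p: "sign_index n \<sigma> x p"
  shows "(\<Sum>i=1..p. f (scind (x (\<sigma> i)) (Adown \<sigma> i)) - f (scind (x (\<sigma> i)) (Adown \<sigma> (i - 1))))
       = shift0 f (\<lambda>i. - vneg x i)"
proof -
  define V where "V i = f (restr x (Adown \<sigma> i))" for i
  have "p \<le> n" using p unfolding sign_index_def by simp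
  have "(\<Sum>i=1..p. f (scind (x (\<sigma> i)) (Adown \<sigma> i)) - f (scind (x (\<sigma> i)) (Adown \<sigma> (i - 1))))
      = (\<Sum>i=Suc 0..p. V i - V (i - 1))"
    using comod_down_layer[OF comod I0 s x] sign_index_neg[OF x(2) p] \<open>p \<le> n\<close>
    by (intro sum.cong) (auto simp: V_def)
  also have "\<dots> = V p - V 0" by (rule sum_telescope'') simp
  also have "\<dots> = shift0 f (\<lambda>i. - vneg x i)"
    unfolding V_def shift0_def vneg_as_restr[OF s x(1) I0 x(2) p] Adown_def
    by (simp add: restr_empty)
  finally show ?thesis .
qed

lemma comod_imp_iii:
  assumes comod: "comod n I f" and I0: "0 \<in> I"
  shows "cond_iii n I f f f"
  unfolding cond_iii_def
proof (intro allI impI)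
  fix \<sigma> x p
  assume "\<sigma> permutes {1..n} \<and> x \<in> cube n I \<and> sorted_by n \<sigma> x \<and> p \<le> n
    \<and> (p = 0 \<or> x (\<sigma> p) < 0) \<and> (p = n \<or> 0 \<le> x (\<sigma> (p + 1)))"
  then have s: "\<sigma> permutes {1..n}" and x: "x \<in> cube n I" "sorted_by n \<sigma> x"
    and p: "sign_index n \<sigma> x p"
    unfolding sign_index_def by auto
  have "shift0 f x = shift0 f (\<lambda>i. - vneg x i) + shift0 f (vpos x)"
    using comod_split_at_zero[OF comod x(1) I0] unfolding shift0_def by linarith
  then show "shift0 f x =
      (\<Sum>i=1..p. f (scind (x (\<sigma> i)) (Adown \<sigma> i)) - f (scind (x (\<sigma> i)) (Adown \<sigma> (i - 1))))
    + (\<Sum>i=p+1..n. f (scind (x (\<sigma> i)) (Aup n \<sigma> i)) - f (scind (x (\<sigma> i)) (Aup n \<sigma> (i + 1))))"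
    unfolding comod_down_sum[OF comod I0 s x p] comod_up_sum[OF comod I0 s x p] .
qed

section \<open>(ii) implies (i)\<close>

text \<open>The maps x \<mapsto> x^+ and x \<mapsto> -x^- are monotone, so they commute with
  componentwise min and max.\<close>

lemma vpos_min: "vpos (\<lambda>i. min (x i) (y i)) = (\<lambda>i. min (vpos x i) (vpos y i))"
  unfolding vpos_def by (auto simp: min_def max_def)

lemma vpos_max: "vpos (\<lambda>i. max (x i) (y i)) = (\<lambda>i. max (vpos x i) (vpos y i))"
  unfolding vpos_def by (auto simp: min_def max_def)

lemma vneg_min: "(\<lambda>i. - vneg (\<lambda>i. min (x i) (y i)) i) = (\<lambda>i. min (- vneg x i) (- vneg y i))"
  unfolding vneg_def vpos_def by (auto simp: min_def max_def)

lemma vneg_max: "(\<lambda>i. - vneg (\<lambda>i. max (x i) (y i)) i) = (\<lambda>i. max (- vneg x i) (- vneg y i))"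
  unfolding vneg_def vpos_def by (auto simp: min_def max_def)

lemma ii_imp_comod:
  assumes c: "cond_ii n I f g h" and I0: "0 \<in> I"
  shows "comod n I f"
  unfolding comod_def comonotonic_def
proof (intro allI impI, elim exE conjE)
  fix x y \<sigma>
  assume s: "\<sigma> permutes {1..n}" and xc: "x \<in> cube n I" and yc: "y \<in> cube n I"
    and xs: "sorted_by n \<sigma> x" and ys: "sorted_by n \<sigma> y"
  have gc: "comod n (Ipos I) g" and hc: "comod n (Ineg I) h"
    and rep: "\<And>z. z \<in> cube n I \<Longrightarrow> shift0 f z = shift0 g (vpos z) + shift0 h (\<lambda>i. - vneg z i)"
    using c unfolding cond_ii_def by auto
  have G: "g (vpos x) + g (vpos y)
      = g (vpos (\<lambda>i. min (x i) (y i))) + g (vpos (\<lambda>i. max (x i) (y i)))"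
    unfolding vpos_min vpos_max
    by (rule comodD[OF gc s vpos_cube[OF xc I0] vpos_cube[OF yc I0] vpos_sorted[OF xs] vpos_sorted[OF ys]])
  have H: "h (\<lambda>i. - vneg x i) + h (\<lambda>i. - vneg y i)
      = h (\<lambda>i. - vneg (\<lambda>i. min (x i) (y i)) i) + h (\<lambda>i. - vneg (\<lambda>i. max (x i) (y i)) i)"
    unfolding vneg_min vneg_max
    by (rule comodD[OF hc s vneg_cube[OF xc I0] vneg_cube[OF yc I0] vneg_sorted[OF xs] vneg_sorted[OF ys]])
  show "f x + f y = f (\<lambda>i. min (x i) (y i)) + f (\<lambda>i. max (x i) (y i))"
    using G H rep[OF xc] rep[OF yc] rep[OF min_cube[OF xc yc]] rep[OF max_cube[OF xc yc]]
    unfolding shift0_def by linarith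
qed

section \<open>(iii) implies (i)\<close>

text \<open>The summand of (iii) at position i, as a function of t = x_\<sigma>(i) alone;
  which of the two forms applies is decided by the sign of t.\<close>

definition layer_term :: "((nat \<Rightarrow> real) \<Rightarrow> real) \<Rightarrow> ((nat \<Rightarrow> real) \<Rightarrow> real) \<Rightarrow>
    nat \<Rightarrow> (nat \<Rightarrow> nat) \<Rightarrow> nat \<Rightarrow> real \<Rightarrow> real" where
  "layer_term g h n \<sigma> i t =
     (if t < 0 then h (scind t (Adown \<sigma> i)) - h (scind t (Adown \<sigma> (i - 1)))
      else g (scind t (Aup n \<sigma> i)) - g (scind t (Aup n \<sigma> (i + 1))))"

lemma iii_separable:
  assumes c: "cond_iii n I f g h" and s: "\<sigma> permutes {1..n}"
    and z: "z \<in> cube n I" "sorted_by n \<sigma> z"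
  shows "shift0 f z = (\<Sum>i=1..n. layer_term g h n \<sigma> i (z (\<sigma> i)))"
proof -
  obtain p where p: "sign_index n \<sigma> z p" using sign_index_exists by blast
  then have "p \<le> n" unfolding sign_index_def by simp
  have "shift0 f z =
          (\<Sum>i=1..p. h (scind (z (\<sigma> i)) (Adown \<sigma> i)) - h (scind (z (\<sigma> i)) (Adown \<sigma> (i - 1))))
        + (\<Sum>i=p+1..n. g (scind (z (\<sigma> i)) (Aup n \<sigma> i)) - g (scind (z (\<sigma> i)) (Aup n \<sigma> (i + 1))))"
    using c s z p unfolding cond_iii_def sign_index_def by blast
  also have "\<dots> = (\<Sum>i=1..p. layer_term g h n \<sigma> i (z (\<sigma> i)))
                + (\<Sum>i=p+1..n. layer_term g h n \<sigma> i (z (\<sigma> i)))"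
    using sign_index_neg[OF z(2) p] sign_index_nonneg[OF z(2) p]
    by (intro arg_cong2[where f = "(+)"] sum.cong) (auto simp: layer_term_def not_less[symmetric])
  also have "\<dots> = (\<Sum>i=1..n. layer_term g h n \<sigma> i (z (\<sigma> i)))"
  proof -
    have "{1..n} = {1..p} \<union> {p+1..n}" "{1..p} \<inter> {p+1..n} = {}" using \<open>p \<le> n\<close> by auto
    then show ?thesis by (simp add: sum.union_disjoint)
  qed
  finally show ?thesis .
qed

text \<open>Sums of single-coordinate terms are modular for any two vectors:
  at each coordinate, min and max just permute the two values.\<close>

lemma separable_sum_modular:
  fixes F :: "nat \<Rightarrow> real \<Rightarrow> real"
  shows "(\<Sum>i\<in>A. F i (x (\<sigma> i))) + (\<Sum>i\<in>A. F i (y (\<sigma> i)))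
       = (\<Sum>i\<in>A. F i (min (x (\<sigma> i)) (y (\<sigma> i)))) + (\<Sum>i\<in>A. F i (max (x (\<sigma> i)) (y (\<sigma> i))))"
  unfolding sum.distrib[symmetric] by (intro sum.cong) (auto simp: min_def max_def)

lemma iii_imp_comod:
  assumes c: "cond_iii n I f g h"
  shows "comod n I f"
  unfolding comod_def comonotonic_def
proof (intro allI impI, elim exE conjE)
  fix x y \<sigma>
  assume s: "\<sigma> permutes {1..n}" and xc: "x \<in> cube n I" and yc: "y \<in> cube n I"
    and xs: "sorted_by n \<sigma> x" and ys: "sorted_by n \<sigma> y"
  show "f x + f y = f (\<lambda>i. min (x i) (y i)) + f (\<lambda>i. max (x i) (y i))"
    using separable_sum_modular[where F = "layer_term g h n \<sigma>" and A = "{1..n}" and x = x and y = y and \<sigma> = \<sigma>]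
      iii_separable[OF c s xc xs] iii_separable[OF c s yc ys]
      iii_separable[OF c s min_cube[OF xc yc] min_sorted[OF xs ys]]
      iii_separable[OF c s max_cube[OF xc yc] max_sorted[OF xs ys]]
    unfolding shift0_def by linarith
qed

theorem theorem11:
  fixes n :: nat and I :: "real set" and f :: "(nat \<Rightarrow> real) \<Rightarrow> real"
  assumes "is_interval I" and "0 \<in> I"
  shows "(comod n I f \<longleftrightarrow> (\<exists>g h. cond_ii n I f g h))
       \<and> (comod n I f \<longleftrightarrow> (\<exists>g h. cond_iii n I f g h))
       \<and> (comod n I f \<longrightarrow> cond_ii n I f f f \<and> cond_iii n I f f f)"
  using comod_imp_ii[OF _ assms(2)] comod_imp_iii[OF _ assms(2)]
    ii_imp_comod[OF _ assms(2)] iii_imp_comod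
  by blast

end
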